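(* Let $M=M_n\to\infty$ as $n\to\infty$. Assume that (i) $\psi(p_1,\dots,p_r)=\sum_{j=1}^r w_j\varphi(p_j)$ with weights $w_j>0$, where $\varphi$ is decreasing, non-negative on $(0,1/2)$, and one-to-one from $(0,1)$ to $(-\infty,\infty)$; (ii) $W_{n,M_n}^{[0]}$ diverges to infinity in probability; (iii) for every $j\in\{1,\dots,r\}$, the bootstrap replicates $T_{n,j}^{[1]},\dots,T_{n,j}^{[M_n]}$ contain no ties. Then $p_{n,M_n}(W_{n,M_n}^{[0]})\to0$ in probability.
   Context: Setting: Let $\mathbf{X}_n$ denote the available data. For $j\in\{1,\dots,r\}$, let $T_{n,j}=T_{n,j}(\mathbf{X}_n)$ be real-valued test statistics and $\mathbf{T}_n=(T_{n,1},\dots,T_{n,r})$. Let $\mathbf{V}_n^{[1]},\mathbf{V}_n^{[2]},\dots$ be i.i.d. random vectors representing the additional randomness of a resampling mechanism and $\mathbf{T}_n^{[i]}=(T_{n,1}^{[i]},\dots,T_{n,r}^{[i]})=\mathbf{T}_n^{[i]}(\mathbf{X}_n,\mathbf{V}_n^{[i]})$, $i\ge1$, bootstrap replicates of $\mathbf{T}_n$; $\mathbf{T}_n^{[0]}=\mathbf{T}_n$. For an integer $M$, $i\in\{0,\dots,M\}$, $j\in\{1,\dots,r\}$: $p_{n,M}(T_{n,j}^{[i]})=\frac{1}{M+1}\{\frac12+\sum_{k=1}^M\mathbf{1}(T_{n,j}^{[k]}\ge T_{n,j}^{[i]})\}$, $W_{n,M}^{[i]}=\psi\{p_{n,M}(T_{n,1}^{[i]}),\dots,p_{n,M}(T_{n,r}^{[i]})\}$,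 and $p_{n,M}(W_{n,M}^{[0]})=\frac1M\sum_{k=1}^M\mathbf{1}(W_{n,M}^{[k]}\ge W_{n,M}^{[0]})$. *)

theory Defs
  imports "HOL-Probability.Probability"
begin

definition pval :: "nat \<Rightarrow> (nat \<Rightarrow> real) \<Rightarrow> real \<Rightarrow> real" where
  "pval M t x = (1/2 + real (card {k \<in> {1..M}. x \<le> t k})) / (real M + 1)"

text \<open>Combined statistic W^{[i]} = psi(p(T_1^{[i]}), ..., p(T_r^{[i]})).  T i j is T_j^{[i]}
  (i = 0 original, i = 1..M bootstrap); the p-vector is passed as a function of j in 1..r.\<close>
definition Wstat :: "nat \<Rightarrow> ((nat \<Rightarrow> real) \<Rightarrow> real) \<Rightarrow> (nat \<Rightarrow> nat \<Rightarrow> real) \<Rightarrow> nat \<Rightarrow> real" where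
  "Wstat M psi T i = psi (\<lambda>j. pval M (\<lambda>k. T k j) (T i j))"

definition pW :: "nat \<Rightarrow> ((nat \<Rightarrow> real) \<Rightarrow> real) \<Rightarrow> (nat \<Rightarrow> nat \<Rightarrow> real) \<Rightarrow> real" where
  "pW M psi T = real (card {k \<in> {1..M}. Wstat M psi T 0 \<le> Wstat M psi T k}) / real M"

text \<open>All statistics as functions of the sample point: index i = 0 is the original
  statistic T_{n,j}(X_n), i >= 1 the bootstrap replicate T_{n,j}^{[i]}(X_n, V_n^{[i]}).\<close>
definition allT :: "(nat \<Rightarrow> nat \<Rightarrow> 'x \<Rightarrow> real) \<Rightarrow> (nat \<Rightarrow> nat \<Rightarrow> 'x \<Rightarrow> 'v \<Rightarrow> real)
    \<Rightarrow> (nat \<Rightarrow> 'a \<Rightarrow> 'x) \<Rightarrow> (nat \<Rightarrow> nat \<Rightarrow> 'a \<Rightarrow> 'v) \<Rightarrow> nat \<Rightarrow> 'a \<Rightarrow> nat \<Rightarrow> nat \<Rightarrow> real" where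
  "allT T Tb X V n \<omega> i j = (if i = 0 then T n j (X n \<omega>) else Tb n j (X n \<omega>) (V n i \<omega>))"

end

theory Submission
  imports Defs
begin

text \<open>The argument is deterministic.  For a single statistic at most \<open>q (M + 1)\<close> of the
  \<open>M\<close> bootstrap replicates have p-value \<open>\<le> q\<close>, since all of them are at least the smallest
  one among them.  Given \<open>\<epsilon>\<close>, take \<open>\<delta>\<close> with \<open>2 r \<delta> < \<epsilon>\<close> and \<open>C = \<Sum>\<^sub>j w\<^sub>j \<phi>(\<delta>)\<close>.  If
  \<open>W\<^sub>0 > C\<close>, then, as \<open>\<phi>\<close> is decreasing, every replicate with \<open>W\<^sub>k \<ge> W\<^sub>0\<close> has some
  coordinate p-value \<open>\<le> \<delta>\<close>, so \<open>p(W\<^sub>0) \<le> r \<delta> (M + 1) / M \<le> 2 r \<delta> < \<epsilon>\<close>.  Hence the event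
  \<open>p(W\<^sub>0) > \<epsilon>\<close> is contained in \<open>W\<^sub>0 \<le> C\<close>, whose probability vanishes by assumption.\<close>

lemma pval_in_unit_interval: "pval M t x \<in> {0<..<1}"
proof -
  have "card {k \<in> {1..M}. x \<le> t k} \<le> card {1..M}" by (rule card_mono) auto
  then show ?thesis unfolding pval_def by (auto simp: divide_less_eq)
qed

lemma card_pval_le:
  assumes "q \<ge> 0"
  shows "real (card {k \<in> {1..M}. pval M t (t k) \<le> q}) \<le> q * (real M + 1)"
proof (cases "{k \<in> {1..M}. pval M t (t k) \<le> q} = {}")
  case True
  then show ?thesis using assms by (simp only: card.empty) simp
next
  case False
  define S where "S = {k \<in> {1..M}. pval M t (t k) \<le> q}"
  have "finite S" "S \<noteq> {}" using False by (auto simp: S_def)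
  then have "Min (t ` S) \<in> t ` S" by simp
  then obtain k0 where k0: "k0 \<in> S" "t k0 = Min (t ` S)" by auto
  have "S \<subseteq> {l \<in> {1..M}. t k0 \<le> t l}"
    using k0 \<open>finite S\<close> by (auto simp: S_def)
  then have "card S \<le> card {l \<in> {1..M}. t k0 \<le> t l}"
    by (intro card_mono) auto
  moreover have "1/2 + real (card {l \<in> {1..M}. t k0 \<le> t l}) \<le> q * (real M + 1)"
    using k0(1) by (simp add: S_def pval_def divide_le_eq add_pos_nonneg)
  ultimately show ?thesis unfolding S_def by linarith
qed

lemma sum_weighted_le_if_pvals_gt:
  fixes w p :: "nat \<Rightarrow> real" and phi :: "real \<Rightarrow> real"
  assumes w_pos: "\<And>j. j \<in> {1..r} \<Longrightarrow> w j > 0"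
    and phi_decr: "\<And>x y. x \<in> {0<..<1} \<Longrightarrow> y \<in> {0<..<1} \<Longrightarrow> x \<le> y \<Longrightarrow> phi y \<le> phi x"
    and \<delta>: "\<delta> \<in> {0<..<1}"
    and p: "\<And>j. p j \<in> {0<..<1}" "\<And>j. j \<in> {1..r} \<Longrightarrow> p j > \<delta>"
  shows "(\<Sum>j = 1..r. w j * phi (p j)) \<le> (\<Sum>j = 1..r. w j * phi \<delta>)"
proof (rule sum_mono)
  fix j assume j: "j \<in> {1..r}"
  then have "phi (p j) \<le> phi \<delta>" using phi_decr[OF \<delta>] p by force
  then show "w j * phi (p j) \<le> w j * phi \<delta>" using w_pos[OF j] by simp
qed

lemma pW_le_if_Wstat_gt:
  fixes w :: "nat \<Rightarrow> real" and phi :: "real \<Rightarrow> real"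
  assumes psi_def: "\<And>p. psi p = (\<Sum>j = 1..r. w j * phi (p j))"
    and w_pos: "\<And>j. j \<in> {1..r} \<Longrightarrow> w j > 0"
    and phi_decr: "\<And>x y. x \<in> {0<..<1} \<Longrightarrow> y \<in> {0<..<1} \<Longrightarrow> x \<le> y \<Longrightarrow> phi y \<le> phi x"
    and \<delta>: "\<delta> \<in> {0<..<1}"
    and W0: "Wstat M psi t 0 > (\<Sum>j = 1..r. w j * phi \<delta>)"
  shows "pW M psi t \<le> 2 * real r * \<delta>"
proof -
  define A where "A = {k \<in> {1..M}. Wstat M psi t 0 \<le> Wstat M psi t k}"
  define B where "B j = {k \<in> {1..M}. pval M (\<lambda>k. t k j) (t k j) \<le> \<delta>}" for j
  have "A \<subseteq> (\<Union>j\<in>{1..r}. B j)"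
  proof
    fix k assume k: "k \<in> A"
    show "k \<in> (\<Union>j\<in>{1..r}. B j)"
    proof (rule ccontr)
      assume "k \<notin> (\<Union>j\<in>{1..r}. B j)"
      then have "pval M (\<lambda>k. t k j) (t k j) > \<delta>" if "j \<in> {1..r}" for j
        using k that by (force simp: A_def B_def)
      then have "Wstat M psi t k \<le> (\<Sum>j = 1..r. w j * phi \<delta>)"
        unfolding Wstat_def psi_def
        by (intro sum_weighted_le_if_pvals_gt[OF w_pos phi_decr \<delta> pval_in_unit_interval])
      then show False using W0 k by (simp add: A_def)
    qed
  qed
  then have "card A \<le> card (\<Union>j\<in>{1..r}. B j)"
    by (intro card_mono) (auto simp: B_def)
  also have "\<dots> \<le> (\<Sum>j\<in>{1..r}. card (B j))" by (rule card_UN_le) simp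
  finally have "card A \<le> (\<Sum>j\<in>{1..r}. card (B j))" .
  then have "real (card A) \<le> (\<Sum>j\<in>{1..r}. real (card (B j)))"
    by (metis of_nat_le_iff of_nat_sum)
  also have "\<dots> \<le> (\<Sum>j\<in>{1..r}. \<delta> * (real M + 1))"
    using card_pval_le \<delta> by (intro sum_mono) (auto simp: B_def)
  also have "\<dots> = real r * \<delta> * (real M + 1)" by simp
  finally have card_A: "real (card A) \<le> real r * \<delta> * (real M + 1)" .
  show ?thesis
  proof (cases "M = 0")
    case False
    then have "real r * \<delta> * (real M + 1) \<le> real r * \<delta> * (2 * real M)"
      using \<delta> by (intro mult_left_mono) auto
    with card_A False show ?thesis
      unfolding pW_def A_def[symmetric] by (simp add: divide_le_eq)
  qed (use \<delta> in \<open>simp add: pW_def\<close>)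
qed

lemma borel_measurable_Wstat:
  fixes w :: "nat \<Rightarrow> real" and phi :: "real \<Rightarrow> real"
    and t :: "'a \<Rightarrow> nat \<Rightarrow> nat \<Rightarrow> real"
  assumes psi_def: "\<And>p. psi p = (\<Sum>j = 1..r. w j * phi (p j))"
    and t: "\<And>k j. (\<lambda>\<omega>. t \<omega> k j) \<in> borel_measurable P"
  shows "(\<lambda>\<omega>. Wstat M psi (t \<omega>) i) \<in> borel_measurable P"
proof -
  txt \<open>No measurability of \<open>phi\<close> is needed: p-values take only finitely many values.\<close>
  have phi_pval: "(\<lambda>\<omega>. phi (pval M (\<lambda>k. t \<omega> k j) (t \<omega> i j))) \<in> borel_measurable P" for j
  proof -
    define h where "h \<omega> = pval M (\<lambda>k. t \<omega> k j) (t \<omega> i j)" for \<omega>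
    have "real (card {k \<in> {1..M}. Q k}) = (\<Sum>k\<in>{1..M}. if Q k then 1 else 0)" for Q
      by (simp flip: sum.inter_filter)
    then have "h \<in> borel_measurable P"
      unfolding h_def pval_def using t by measurable
    moreover have "h ` space P \<subseteq> (\<lambda>m. (1/2 + real m) / (real M + 1)) ` {0..M}"
    proof
      fix y assume "y \<in> h ` space P"
      then obtain \<omega> where y: "y = h \<omega>" by auto
      have "card {k \<in> {1..M}. t \<omega> i j \<le> t \<omega> k j} \<le> card {1..M}" by (rule card_mono) auto
      then show "y \<in> (\<lambda>m. (1/2 + real m) / (real M + 1)) ` {0..M}"
        by (auto simp: y h_def pval_def)
    qed
    then have "finite (h ` space P)" by (rule finite_subset) simp
    ultimately have "simple_function P (phi \<circ> h)"
      by (simp add: simple_function_borel_measurable)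
    then show ?thesis by (simp add: h_def comp_def borel_measurable_simple_function)
  qed
  show ?thesis
    unfolding Wstat_def psi_def
    by (intro borel_measurable_sum borel_measurable_times borel_measurable_const phi_pval)
qed

lemma (in finite_measure) tendsto_measure_zero_subset:
  assumes "\<And>n. A n \<subseteq> B n" "\<And>n. B n \<in> sets M" "(\<lambda>n. measure M (B n)) \<longlonglongrightarrow> 0"
  shows "(\<lambda>n. measure M (A n)) \<longlonglongrightarrow> 0"
proof (rule tendsto_sandwich[OF _ _ tendsto_const assms(3)])
  have "measure M (A n) \<le> measure M (B n)" for n
    using assms(1,2) finite_measure_mono by (cases "A n \<in> sets M") (auto simp: measure_notin_sets)
  then show "\<forall>\<^sub>F n in sequentially. measure M (A n) \<le> measure M (B n)" by simp
qed simp

lemma Wstat_bounded_if_pW_gt: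
  fixes w :: "nat \<Rightarrow> real" and phi :: "real \<Rightarrow> real"
  assumes psi_def: "\<And>p. psi p = (\<Sum>j = 1..r. w j * phi (p j))"
    and w_pos: "\<And>j. j \<in> {1..r} \<Longrightarrow> w j > 0"
    and phi_decr: "\<And>x y. x \<in> {0<..<1} \<Longrightarrow> y \<in> {0<..<1} \<Longrightarrow> x \<le> y \<Longrightarrow> phi y \<le> phi x"
    and "\<epsilon> > 0"
  obtains C where "\<And>M t. \<bar>pW M psi t\<bar> > \<epsilon> \<Longrightarrow> Wstat M psi t 0 \<le> C"
proof
  define \<delta> where "\<delta> = min (1/2) (\<epsilon> / (4 * (real r + 1)))"
  have \<delta>: "\<delta> \<in> {0<..<1}" using \<open>\<epsilon> > 0\<close> by (auto simp: \<delta>_def)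
  have "2 * real r * \<delta> \<le> 2 * real r * (\<epsilon> / (4 * (real r + 1)))"
    by (intro mult_left_mono) (auto simp: \<delta>_def)
  also have "\<dots> < \<epsilon>" using \<open>\<epsilon> > 0\<close> by (simp add: field_simps add_pos_nonneg)
  finally have small: "2 * real r * \<delta> < \<epsilon>" .
  fix M t assume gt: "\<bar>pW M psi t\<bar> > \<epsilon>"
  show "Wstat M psi t 0 \<le> (\<Sum>j = 1..r. w j * phi \<delta>)"
  proof (rule ccontr)
    assume "\<not> ?thesis"
    then have "pW M psi t \<le> 2 * real r * \<delta>"
      using pW_le_if_Wstat_gt[where psi=psi and w=w and phi=phi, OF psi_def w_pos phi_decr \<delta>]
      by simp
    moreover have "pW M psi t \<ge> 0" by (simp add: pW_def)
    ultimately show False using gt small by linarith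
  qed
qed

theorem mainTheorem8:
  fixes P :: "'a measure" and SV :: "'v measure"
    and X :: "nat \<Rightarrow> 'a \<Rightarrow> 'x" and V :: "nat \<Rightarrow> nat \<Rightarrow> 'a \<Rightarrow> 'v"
    and T :: "nat \<Rightarrow> nat \<Rightarrow> 'x \<Rightarrow> real" and Tb :: "nat \<Rightarrow> nat \<Rightarrow> 'x \<Rightarrow> 'v \<Rightarrow> real"
    and r :: nat and Mn :: "nat \<Rightarrow> nat"
    and psi :: "(nat \<Rightarrow> real) \<Rightarrow> real" and w :: "nat \<Rightarrow> real" and phi :: "real \<Rightarrow> real"
  assumes P: "prob_space P"
    and V_meas: "\<And>n i. V n i \<in> measurable P SV"
    and V_indep: "\<And>n. prob_space.indep_vars P (\<lambda>i. SV) (V n) {1..}"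
    and V_ident: "\<And>n i. i \<ge> 1 \<Longrightarrow> distr P SV (V n i) = distr P SV (V n 1)"
    and T_meas: "\<And>n j. (\<lambda>\<omega>. T n j (X n \<omega>)) \<in> borel_measurable P"
    and Tb_meas: "\<And>n i j. (\<lambda>\<omega>. Tb n j (X n \<omega>) (V n i \<omega>)) \<in> borel_measurable P"
    and Mn_lim: "filterlim Mn at_top sequentially"
    and psi_def: "\<And>p. psi p = (\<Sum>j = 1..r. w j * phi (p j))"
    and w_pos: "\<And>j. j \<in> {1..r} \<Longrightarrow> w j > 0"
    and phi_decr: "\<And>x y. x \<in> {0<..<1} \<Longrightarrow> y \<in> {0<..<1} \<Longrightarrow> x \<le> y \<Longrightarrow> phi y \<le> phi x"
    and phi_nonneg: "\<And>x. x \<in> {0<..<1/2} \<Longrightarrow> phi x \<ge> 0"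
    and phi_bij: "bij_betw phi {0<..<1} UNIV"
    and W_div: "\<And>C. (\<lambda>n. measure P {\<omega> \<in> space P.
                   Wstat (Mn n) psi (allT T Tb X V n \<omega>) 0 \<le> C}) \<longlonglongrightarrow> 0"
    and no_ties: "\<And>n j. j \<in> {1..r} \<Longrightarrow> AE \<omega> in P. \<forall>k \<in> {1..Mn n}. \<forall>l \<in> {1..Mn n}.
                   k \<noteq> l \<longrightarrow> Tb n j (X n \<omega>) (V n k \<omega>) \<noteq> Tb n j (X n \<omega>) (V n l \<omega>)"
  shows "\<And>\<epsilon>. \<epsilon> > 0 \<Longrightarrow> (\<lambda>n. measure P {\<omega> \<in> space P.
                   \<bar>pW (Mn n) psi (allT T Tb X V n \<omega>)\<bar> > \<epsilon>}) \<longlonglongrightarrow> 0"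
proof -
  fix \<epsilon> :: real assume "\<epsilon> > 0"
  interpret prob_space P by (rule P)
  obtain C where C: "\<And>M t. \<bar>pW M psi t\<bar> > \<epsilon> \<Longrightarrow> Wstat M psi t 0 \<le> C"
    using Wstat_bounded_if_pW_gt[where psi=psi and w=w and phi=phi,
        OF psi_def w_pos phi_decr \<open>\<epsilon> > 0\<close>] by blast
  let ?W0 = "\<lambda>n \<omega>. Wstat (Mn n) psi (allT T Tb X V n \<omega>) 0"
  have "(\<lambda>\<omega>. allT T Tb X V n \<omega> k j) \<in> borel_measurable P" for n k j
    using T_meas Tb_meas by (simp add: allT_def)
  then have W0_sets: "{\<omega> \<in> space P. ?W0 n \<omega> \<le> C} \<in> sets P" for n
    using borel_measurable_Wstat[OF psi_def] by measurable
  have "{\<omega> \<in> space P. \<bar>pW (Mn n) psi (allT T Tb X V n \<omega>)\<bar> > \<epsilon>}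
      \<subseteq> {\<omega> \<in> space P. ?W0 n \<omega> \<le> C}" for n
    using C by auto
  then show "(\<lambda>n. measure P {\<omega> \<in> space P.
                   \<bar>pW (Mn n) psi (allT T Tb X V n \<omega>)\<bar> > \<epsilon>}) \<longlonglongrightarrow> 0"
    by (rule tendsto_measure_zero_subset[OF _ W0_sets W_div])
qed

end
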